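(* Let $n\ge1$, $q$ a prime power, $s\in\mathbb{F}_q$, and let $(\mathsf{Enc},\mathcal{A})$ be an $n$-party one-round aggregation protocol over $\mathbb{F}_q$ with encoder $\mathsf{Enc}:\mathbb{F}_q\to[\ell]^m$. For $\mathbf{x}\in\mathcal{B}_s$ and $\mathbf{y}\in[\ell]^{nm}$ let $p_{\mathbf{x},\mathbf{y}}=\Pr_{Y\sim\mathcal{S}^{\mathsf{Enc}}_{\mathbf{x}}}[Y=\mathbf{y}]$, $p_{\mathbf{y}}=\sum_{\mathbf{x}\in\mathcal{B}_s}p_{\mathbf{x},\mathbf{y}}$, and $d_{\mathbf{y}}=q^{-(2n-2)}\sum_{\mathbf{x}\in\mathcal{B}_s}\sum_{\mathbf{x}'\in\mathcal{B}_s}|p_{\mathbf{x},\mathbf{y}}-p_{\mathbf{x}',\mathbf{y}}|$. Then for every $\mathbf{y}\in[\ell]^{nm}$, $$d_{\mathbf{y}}\ge 2\left(1-\frac{n^{nm}}{q^{n-1}}\right)\frac{p_{\mathbf{y}}}{q^{n-1}}.$$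
   Context: $\mathcal{B}_s=\{\mathbf{x}\in\mathbb{F}_q^n:\sum_ix_i=s\}$. An $n$-party one-round aggregation protocol over $\mathbb{F}_q$ with $m$ messages per party consists of a randomized encoder $\mathsf{Enc}:\mathbb{F}_q\to[\ell]^m$ (for some positive integer $\ell$; each party applies it to its input with independent randomness) and an analyzer $\mathcal{A}:[\ell]^{nm}\to\mathbb{F}_q$ such that for every $\mathbf{x}\in\mathbb{F}_q^n$, every possible realization of the encodings $\mathsf{Enc}(x_1),\dots,\mathsf{Enc}(x_n)$, and every permutation $\pi$ of $[nm]$, the analyzer applied to the concatenation $(\mathsf{Enc}(x_1),\dots,\mathsf{Enc}(x_n))$ with coordinates permuted by $\pi$ outputs $\sum_i x_i$. $\mathcal{S}^{\mathsf{Enc}}_{\mathbf{x}}$ is the distribution on $[\ell]^{nm}$ of this concatenation after applying an independent uniformly random permutation of the $nm$ coordinates. *)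

theory Defs
  imports "HOL-Probability.Probability_Mass_Function" "HOL-Combinatorics.Permutations"
begin

text \<open>Inputs x in F_q^n are lists of length n; [l] is modelled as {0..<l};
  messages are lists of naturals. A randomized encoder is a map to pmfs.\<close>

definition B_set :: "nat \<Rightarrow> 'a::{finite,field} \<Rightarrow> 'a list set" where
  "B_set n s = {x. length x = n \<and> sum_list x = s}"

fun concat_enc :: "('a \<Rightarrow> nat list pmf) \<Rightarrow> 'a list \<Rightarrow> nat list pmf" where
  "concat_enc E [] = return_pmf []"
| "concat_enc E (x # xs) =
     bind_pmf (E x) (\<lambda>u. bind_pmf (concat_enc E xs) (\<lambda>v. return_pmf (u @ v)))"

definition shuffled :: "('a \<Rightarrow> nat list pmf) \<Rightarrow> 'a list \<Rightarrow> nat list pmf" where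
  "shuffled E x =
     bind_pmf (concat_enc E x) (\<lambda>ys.
       map_pmf (\<lambda>\<pi>. permute_list \<pi> ys) (pmf_of_set {\<pi>. \<pi> permutes {..<length ys}}))"

definition aggregation_protocol ::
  "nat \<Rightarrow> nat \<Rightarrow> nat \<Rightarrow> ('a::{finite,field} \<Rightarrow> nat list pmf) \<Rightarrow> (nat list \<Rightarrow> 'a) \<Rightarrow> bool" where
  "aggregation_protocol n m l Enc A \<longleftrightarrow>
     0 < l \<and>
     (\<forall>a. \<forall>u \<in> set_pmf (Enc a). length u = m \<and> set u \<subseteq> {..<l}) \<and>
     (\<forall>x us \<pi>. length x = n \<longrightarrow> length us = n \<longrightarrow>
        (\<forall>i<n. us ! i \<in> set_pmf (Enc (x ! i))) \<longrightarrow>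
        \<pi> permutes {..<n * m} \<longrightarrow>
        A (permute_list \<pi> (concat us)) = sum_list x)"

end

theory Submission
  imports Defs
begin

text \<open>The analyzer sees only the multiset of all messages, and it must recover the sum.
  Hence if two inputs \<open>x, x'\<close> admit encodings whose per-party message multisets coincide,
  then \<open>x = x'\<close>: exchanging a single party's input together with its encoding leaves the
  multiset unchanged, so it leaves the sum unchanged. An output \<open>y\<close> therefore has at most as
  many preimages as there are ways to split the multiset of \<open>y\<close> into \<open>n\<close> labelled parts,
  at most \<open>n^(nm)\<close>. All other members of \<open>B_s\<close>, at least \<open>q^(n-1) - n^(nm)\<close> of them, give \<open>y\<close>
  probability zero, and every pair of such a zero with an input of positive probability
  contributes that probability, twice, to the sum of absolute differences.\<close>

lemma sum_list_list_update_add: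
  fixes xs :: "'b::cancel_comm_monoid_add list"
  assumes "i < length xs"
  shows "sum_list (xs[i := v]) + xs ! i = sum_list xs + v"
  using assms
proof (induction xs arbitrary: i)
  case Nil then show ?case by simp
next
  case (Cons a xs)
  then show ?case by (cases i) (simp_all add: add_ac)
qed

definition mset_splits :: "nat \<Rightarrow> 'b multiset \<Rightarrow> 'b multiset list set" where
  "mset_splits n M = {ts. length ts = n \<and> sum_list ts = M}"

lemma mset_splits_empty: "mset_splits n {#} = {replicate n {#}}"
proof -
  have "sum_list ts = {#} \<longleftrightarrow> (\<forall>t\<in>set ts. t = {#})" for ts :: "'b multiset list"
    by (induction ts) auto
  then have "ts \<in> mset_splits n {#} \<longleftrightarrow> ts = replicate n {#}" for ts :: "'b multiset list"
    unfolding mset_splits_def by (auto intro: replicate_eqI)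
  then show ?thesis by blast
qed

lemma mset_splits_add_mset_subset:
  "mset_splits n (add_mset a M) \<subseteq>
     (\<lambda>(ts, i). ts[i := add_mset a (ts ! i)]) ` (mset_splits n M \<times> {..<n})"
proof
  fix ts assume ts: "ts \<in> mset_splits n (add_mset a M)"
  then have "a \<in># sum_list ts" by (simp add: mset_splits_def)
  then obtain i where i: "i < length ts" and a: "a \<in># ts ! i"
    by (auto simp: in_set_conv_nth)
  define ts' where "ts' = ts[i := ts ! i - {#a#}]"
  obtain R where R: "ts ! i = add_mset a R"
    using a by (blast dest: multi_member_split)
  have "sum_list ts' + ts ! i = sum_list ts + (ts ! i - {#a#})"
    unfolding ts'_def using i by (rule sum_list_list_update_add)
  then have "sum_list ts' = M"
    using ts R by (simp add: mset_splits_def)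
  moreover have "ts = ts'[i := add_mset a (ts' ! i)]"
    using i a by (simp add: ts'_def)
  moreover have "length ts' = n"
    using ts by (simp add: ts'_def mset_splits_def)
  ultimately show "ts \<in> (\<lambda>(ts, i). ts[i := add_mset a (ts ! i)]) ` (mset_splits n M \<times> {..<n})"
    using i by (intro rev_image_eqI[of "(ts', i)"]) (simp_all add: mset_splits_def)
qed

lemma finite_mset_splits: "finite (mset_splits n M)"
proof (induction M)
  case empty then show ?case by (simp add: mset_splits_empty)
next
  case (add a M)
  then show ?case by (blast intro: finite_subset[OF mset_splits_add_mset_subset])
qed

lemma card_mset_splits_le: "card (mset_splits n M) \<le> n ^ size M"
proof (induction M)
  case empty then show ?case by (simp add: mset_splits_empty)
next
  case (add a M)
  have "card (mset_splits n (add_mset a M)) \<le>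
        card ((\<lambda>(ts, i). ts[i := add_mset a (ts ! i)]) ` (mset_splits n M \<times> {..<n}))"
    by (intro card_mono finite_imageI mset_splits_add_mset_subset)
       (simp add: finite_mset_splits)
  also have "\<dots> \<le> card (mset_splits n M) * n"
    using card_image_le[of "mset_splits n M \<times> {..<n}"]
    by (simp add: finite_mset_splits card_cartesian_product)
  also have "\<dots> \<le> n ^ size (add_mset a M)"
    using add by simp
  finally show ?case .
qed

definition encodings :: "('a \<Rightarrow> 'c pmf) \<Rightarrow> 'a list \<Rightarrow> 'c list set" where
  "encodings E x = {us. list_all2 (\<lambda>a u. u \<in> set_pmf (E a)) x us}"

lemma set_pmf_concat_enc_subset: "set_pmf (concat_enc E x) \<subseteq> concat ` encodings E x"
proof (induction x)
  case Nil then show ?case by (simp add: encodings_def)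
next
  case (Cons a x)
  show ?case
  proof
    fix ys assume "ys \<in> set_pmf (concat_enc E (a # x))"
    then obtain u v where u: "u \<in> set_pmf (E a)" and "v \<in> set_pmf (concat_enc E x)"
      and "ys = u @ v"
      by auto
    with Cons.IH obtain us where "us \<in> encodings E x" "ys = concat (u # us)"
      by auto
    with u show "ys \<in> concat ` encodings E (a # x)"
      by (intro rev_image_eqI[of "u # us"]) (simp_all add: encodings_def)
  qed
qed

lemma mset_in_set_pmf_shuffled:
  assumes "y \<in> set_pmf (shuffled E x)"
  shows "\<exists>us \<in> encodings E x. mset y = mset (concat us)"
proof -
  obtain ys \<pi> where ys: "ys \<in> set_pmf (concat_enc E x)"
    and \<pi>: "\<pi> \<in> set_pmf (pmf_of_set {\<pi>. \<pi> permutes {..<length ys}})"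
    and y: "y = permute_list \<pi> ys"
    using assms unfolding shuffled_def by auto
  have "{\<pi>. \<pi> permutes {..<length ys}} \<noteq> {}"
    using permutes_id by blast
  then have "\<pi> permutes {..<length ys}"
    using \<pi> by (simp add: finite_permutations)
  then have "mset y = mset ys"
    using y by simp
  moreover obtain us where "us \<in> encodings E x" "ys = concat us"
    using set_pmf_concat_enc_subset ys by blast
  ultimately show ?thesis
    by auto
qed

lemma aggregation_protocol_length_concat:
  assumes "aggregation_protocol n m l Enc A" and "us \<in> encodings Enc x"
  shows "length (concat us) = length x * m"
proof -
  have "length u = m" if "u \<in> set_pmf (Enc a)" for a u
    using assms(1) that by (simp add: aggregation_protocol_def)
  then have "\<forall>u \<in> set us. length u = m"
    using assms(2) by (fastforce simp: encodings_def list_all2_conv_all_nth in_set_conv_nth)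
  then have "length (concat us) = length us * m"
    by (induction us) auto
  then show ?thesis
    using assms(2) by (simp add: encodings_def list_all2_lengthD)
qed

lemma aggregation_protocol_sum_list_eq:
  assumes P: "aggregation_protocol n m l Enc A"
    and "length x = n" "length z = n"
    and us: "us \<in> encodings Enc x" and vs: "vs \<in> encodings Enc z"
    and eq: "mset (concat us) = mset (concat vs)"
  shows "sum_list x = sum_list z"
proof -
  have correct: "A (permute_list \<pi> (concat ws)) = sum_list w"
    if "length w = n" "ws \<in> encodings Enc w" "\<pi> permutes {..<n * m}" for w ws \<pi>
    using P that by (auto simp: aggregation_protocol_def encodings_def list_all2_conv_all_nth)
  obtain \<pi> where \<pi>: "\<pi> permutes {..<length (concat vs)}" "permute_list \<pi> (concat vs) = concat us"
    using mset_eq_permutation[OF eq] by blast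
  have "length (concat vs) = n * m"
    using aggregation_protocol_length_concat[OF P vs] \<open>length z = n\<close> by simp
  then have "sum_list z = A (permute_list \<pi> (concat vs))"
    using correct[OF \<open>length z = n\<close> vs] \<pi>(1) by simp
  also have "\<dots> = A (permute_list id (concat us))"
    using \<pi>(2) by simp
  also have "\<dots> = sum_list x"
    using correct[OF \<open>length x = n\<close> us permutes_id] by simp
  finally show ?thesis by simp
qed

lemma aggregation_protocol_input_determined:
  assumes P: "aggregation_protocol n m l Enc A"
    and x: "length x = n" and x': "length x' = n"
    and us: "us \<in> encodings Enc x" and us': "us' \<in> encodings Enc x'"
    and eq: "map mset us = map mset us'"
  shows "x = x'"
proof (rule nth_equalityI)
  show "length x = length x'"
    using x x' by simp
next
  fix i assume "i < length x"
  define z where "z = x[i := x' ! i]"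
  define vs where "vs = us[i := us' ! i]"
  have lengths: "length us = n" "length us' = n"
    using us us' x x' by (auto simp: encodings_def list_all2_lengthD)
  have "vs \<in> encodings Enc z"
    using us us' \<open>i < length x\<close> x x' unfolding vs_def z_def encodings_def
    by (auto simp: list_all2_conv_all_nth nth_list_update)
  moreover have "map mset vs = map mset us"
    using eq \<open>i < length x\<close> x lengths unfolding vs_def
    by (metis list_update_id map_update nth_map)
  then have "mset (concat us) = mset (concat vs)"
    by (simp add: mset_concat)
  ultimately have "sum_list x = sum_list z"
    using aggregation_protocol_sum_list_eq[OF P x _ us] x by (simp add: z_def)
  moreover have "sum_list z + x ! i = sum_list x + x' ! i"
    unfolding z_def using \<open>i < length x\<close> by (rule sum_list_list_update_add)
  ultimately show "x ! i = x' ! i"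
    by simp
qed

lemma card_inputs_with_output_le:
  assumes P: "aggregation_protocol n m l Enc A"
  shows "card {x. length x = n \<and> y \<in> set_pmf (shuffled Enc x)} \<le> n ^ length y"
proof -
  let ?S = "{x. length x = n \<and> y \<in> set_pmf (shuffled Enc x)}"
  have "\<forall>x \<in> ?S. \<exists>us. us \<in> encodings Enc x \<and> mset y = mset (concat us)"
    using mset_in_set_pmf_shuffled by blast
  then obtain U where U: "\<And>x. x \<in> ?S \<Longrightarrow> U x \<in> encodings Enc x \<and> mset y = mset (concat (U x))"
    by metis
  have "map mset (U x) \<in> mset_splits n (mset y)" if "x \<in> ?S" for x
    using U[OF that] that by (auto simp: mset_splits_def encodings_def mset_concat list_all2_lengthD)
  moreover have "inj_on (\<lambda>x. map mset (U x)) ?S"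
    using aggregation_protocol_input_determined[OF P] U by (intro inj_onI) blast
  ultimately have "card ?S \<le> card (mset_splits n (mset y))"
    by (intro card_inj_on_le) (auto simp: finite_mset_splits)
  also have "\<dots> \<le> n ^ length y"
    using card_mset_splits_le[of n "mset y"] by simp
  finally show ?thesis .
qed

lemma finite_B_set: "finite (B_set n s)"
  by (rule finite_subset[OF _ finite_lists_length_eq[of UNIV n]]) (auto simp: B_set_def)

lemma card_B_set_ge:
  fixes s :: "'a::{finite,field}"
  assumes "n \<ge> 1"
  shows "CARD('a) ^ (n - 1) \<le> card (B_set n s)"
proof -
  let ?L = "{zs. set zs \<subseteq> (UNIV :: 'a set) \<and> length zs = n - 1}"
  let ?complete = "\<lambda>zs. zs @ [s - sum_list zs]"
  have "inj_on ?complete ?L" and "?complete ` ?L \<subseteq> B_set n s"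
    using assms by (auto simp: inj_on_def B_set_def)
  then have "card ?L \<le> card (B_set n s)"
    by (intro card_inj_on_le finite_B_set)
  then show ?thesis
    using card_lists_length_eq[of "UNIV :: 'a set" "n - 1"] by simp
qed

lemma sum_abs_diff_ge_card_zeros:
  fixes P :: "'b \<Rightarrow> real"
  assumes "finite B" and nonneg: "\<And>x. x \<in> B \<Longrightarrow> 0 \<le> P x"
  shows "2 * card {x \<in> B. P x = 0} * (\<Sum>x\<in>B. P x) \<le> (\<Sum>x\<in>B. \<Sum>x'\<in>B. \<bar>P x - P x'\<bar>)"
proof -
  define Z where "Z = {x \<in> B. P x = 0}"
  define p where "p = (\<Sum>x\<in>B. P x)"
  have "Z \<subseteq> B"
    by (auto simp: Z_def)
  have p: "p = (\<Sum>x\<in>B - Z. P x)"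
    unfolding p_def by (rule sum.mono_neutral_right) (auto simp: Z_def \<open>finite B\<close>)
  have "(\<Sum>x\<in>B. \<Sum>x'\<in>B. \<bar>P x - P x'\<bar>) =
        (\<Sum>x\<in>B - Z. \<Sum>x'\<in>B. \<bar>P x - P x'\<bar>) + (\<Sum>x\<in>Z. \<Sum>x'\<in>B. \<bar>P x - P x'\<bar>)"
    using sum.subset_diff[OF \<open>Z \<subseteq> B\<close> \<open>finite B\<close>] by simp
  also have "\<dots> \<ge> (\<Sum>x\<in>B - Z. \<Sum>x'\<in>Z. \<bar>P x - P x'\<bar>) + (\<Sum>x\<in>Z. \<Sum>x'\<in>B - Z. \<bar>P x - P x'\<bar>)"
    using \<open>finite B\<close> \<open>Z \<subseteq> B\<close>
    by (intro add_mono sum_mono sum_mono2) auto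
  also have "(\<Sum>x\<in>B - Z. \<Sum>x'\<in>Z. \<bar>P x - P x'\<bar>) = card Z * p"
    using nonneg by (simp add: p Z_def sum_distrib_left)
  also have "(\<Sum>x\<in>Z. \<Sum>x'\<in>B - Z. \<bar>P x - P x'\<bar>) = card Z * p"
    using nonneg by (simp add: p Z_def)
  finally show ?thesis
    by (simp add: Z_def p_def mult_ac)
qed

lemma card_B_set_outside_support_ge:
  fixes s :: "'a::{finite,field}"
  assumes "n \<ge> 1" and P: "aggregation_protocol n m l Enc A"
  shows "real CARD('a) ^ (n - 1) - real n ^ length y
           \<le> card {x \<in> B_set n s. pmf (shuffled Enc x) y = 0}"
proof -
  let ?Z = "{x \<in> B_set n s. pmf (shuffled Enc x) y = 0}"
  let ?N = "{x \<in> B_set n s. pmf (shuffled Enc x) y \<noteq> 0}"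
  have "?N \<subseteq> {x. length x = n \<and> y \<in> set_pmf (shuffled Enc x)}"
    by (auto simp: B_set_def set_pmf_iff)
  moreover have "finite {x. length x = n \<and> y \<in> set_pmf (shuffled Enc x)}"
    by (rule finite_subset[OF _ finite_lists_length_eq[of UNIV n]]) auto
  ultimately have "card ?N \<le> card {x. length x = n \<and> y \<in> set_pmf (shuffled Enc x)}"
    by (simp add: card_mono)
  also have "\<dots> \<le> n ^ length y"
    by (rule card_inputs_with_output_le[OF P])
  finally have "card ?N \<le> n ^ length y" .
  moreover have "card (B_set n s) = card ?Z + card ?N"
  proof -
    have "card (B_set n s) = card (?Z \<union> ?N)"
      by (rule arg_cong[where f = card]) auto
    also have "\<dots> = card ?Z + card ?N"
      using finite_B_set[of n s] by (intro card_Un_disjoint) auto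
    finally show ?thesis .
  qed
  moreover have "CARD('a) ^ (n - 1) \<le> card (B_set n s)"
    using card_B_set_ge[OF \<open>n \<ge> 1\<close>] .
  ultimately have "CARD('a) ^ (n - 1) \<le> card ?Z + n ^ length y"
    by linarith
  then show ?thesis
    by (simp add: algebra_simps flip: of_nat_add of_nat_power of_nat_le_iff)
qed

theorem mainTheorem13:
  fixes n m l :: nat and s :: "'a::{finite,field}"
    and Enc :: "'a \<Rightarrow> nat list pmf" and A :: "nat list \<Rightarrow> 'a"
    and y :: "nat list"
  assumes "n \<ge> 1"
    and "aggregation_protocol n m l Enc A"
    and "length y = n * m" and "set y \<subseteq> {..<l}"
  shows "(1 / real CARD('a) ^ (2 * n - 2)) *
           (\<Sum>x\<in>B_set n s. \<Sum>x'\<in>B_set n s. \<bar>pmf (shuffled Enc x) y - pmf (shuffled Enc x') y\<bar>)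
         \<ge> 2 * (1 - real n ^ (n * m) / real CARD('a) ^ (n - 1)) *
           (\<Sum>x\<in>B_set n s. pmf (shuffled Enc x) y) / real CARD('a) ^ (n - 1)"
proof -
  define Q where "Q = real CARD('a) ^ (n - 1)"
  define K where "K = real n ^ (n * m)"
  define p where "p = (\<Sum>x\<in>B_set n s. pmf (shuffled Enc x) y)"
  define D where "D = (\<Sum>x\<in>B_set n s. \<Sum>x'\<in>B_set n s. \<bar>pmf (shuffled Enc x) y - pmf (shuffled Enc x') y\<bar>)"
  have "Q - K \<le> card {x \<in> B_set n s. pmf (shuffled Enc x) y = 0}"
    using card_B_set_outside_support_ge[OF assms(1,2), where y = y and s = s] assms(3)
    by (simp add: Q_def K_def)
  then have "2 * (Q - K) * p \<le> 2 * card {x \<in> B_set n s. pmf (shuffled Enc x) y = 0} * p"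
    by (intro mult_right_mono) (simp_all add: p_def sum_nonneg)
  also have "\<dots> \<le> D"
    unfolding p_def D_def by (rule sum_abs_diff_ge_card_zeros[OF finite_B_set]) simp
  finally have "2 * (Q - K) * p / (Q * Q) \<le> D / (Q * Q)"
    by (simp add: divide_right_mono)
  moreover have "real CARD('a) ^ (2 * n - 2) = Q * Q"
    unfolding Q_def power_add[symmetric] by (intro arg_cong[where f = "(^) _"]) linarith
  moreover have "2 * (1 - K / Q) * p / Q = 2 * (Q - K) * p / (Q * Q)"
    by (simp add: Q_def field_simps)
  ultimately show ?thesis
    by (simp add: Q_def K_def p_def D_def)
qed

end
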